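(* Let $(X,d)$ be a metric space and $x_0\in X$. Let $\ell:X\to[0,+\infty)$ be defined by $\ell(x_0)=0$ and $\ell(x)=1$ for all $x\neq x_0$. Then $X$ is complete if and only if the equation $(\mathcal{G}_0)$ with data $\ell$ has a unique solution, namely $u_0(x)=d(x,x_0)$.
   Context: Global slope: $G[u](x)=\sup_{y\neq x}\frac{(u(x)-u(y))_+}{d(x,y)}$ if $u(x)<+\infty$, $G[u](x)=+\infty$ otherwise ($\alpha_+=\max\{\alpha,0\}$). Equation $(\mathcal{G}_0)$ with data $\ell$: a solution is a lower semicontinuous $u:X\to\mathbb{R}\cup\{+\infty\}$ with $\inf_X u=0$ and $G[u](x)=\ell(x)$ for all $x\in X$. *)

theory Defs
  imports "HOL-Analysis.Analysis"
begin

text \<open>Functions with values in \<real> \<union> {+\<infinity>} are modelled as ereal-valued functions;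
  the normalisation inf u = 0 rules out the value -\<infinity>.\<close>

definition lsc :: "('a::metric_space \<Rightarrow> ereal) \<Rightarrow> bool" where
  "lsc u \<longleftrightarrow> (\<forall>x. \<forall>c. c < u x \<longrightarrow> (\<forall>\<^sub>F y in at x. c < u y))"

text \<open>The value 0 is included in the supremum (harmless since all terms are \<ge> 0), so that the
  supremum over an empty index set (one-point space) is 0.\<close>
definition global_slope :: "('a::metric_space \<Rightarrow> ereal) \<Rightarrow> 'a \<Rightarrow> ereal" where
  "global_slope u x =
     (if u x < \<infinity> then
        Sup (insert 0 {max (u x - u y) 0 / ereal (dist x y) | y. y \<noteq> x})
      else \<infinity>)"

definition is_solution_G0 :: "('a::metric_space \<Rightarrow> real) \<Rightarrow> ('a \<Rightarrow> ereal) \<Rightarrow> bool" where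
  "is_solution_G0 l u \<longleftrightarrow>
     lsc u \<and> (INF x. u x) = 0 \<and> (\<forall>x. global_slope u x = ereal (l x))"

end

theory Submission
  imports Defs
begin

text \<open>A solution of (G_0) with this data is a finite function g \<ge> 0 with g x0 = 0,
  g x - g y \<le> d(x,y), and global slope \<ge> 1 away from x0; d(\<cdot>,x0) is one of them.
  If X is complete, Ekeland's variational principle applied to g with a constant \<lambda> < 1 produces
  a point that no other point undercuts by \<lambda> times the distance; slope \<ge> 1 forces this point
  to be x0, whence g \<ge> \<lambda> d(\<cdot>,x0) for all \<lambda> < 1, and so g = d(\<cdot>,x0).
  If X is not complete, a non-convergent Cauchy sequence s defines h x = lim d(x, s n) > 0, the
  distance to the missing limit point, and min (d(\<cdot>,x0)) h is a second solution.\<close>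

lemma global_slope_ereal:
  fixes g :: "'a::metric_space \<Rightarrow> real"
  shows "global_slope (\<lambda>x. ereal (g x)) x =
    Sup (insert 0 ((\<lambda>y. ereal (max (g x - g y) 0 / dist x y)) ` {y. y \<noteq> x}))"
proof -
  have "max (ereal (g x) - ereal (g y)) 0 / ereal (dist x y) = ereal (max (g x - g y) 0 / dist x y)"
    if "y \<noteq> x" for y
    using that by (simp add: max_def)
  then have "{max (ereal (g x) - ereal (g y)) 0 / ereal (dist x y) | y. y \<noteq> x}
      = (\<lambda>y. ereal (max (g x - g y) 0 / dist x y)) ` {y. y \<noteq> x}"
    unfolding setcompr_eq_image by (intro image_cong) auto
  then show ?thesis
    unfolding global_slope_def by simp
qed

lemma global_slope_nonneg: "0 \<le> global_slope u x"
  unfolding global_slope_def by (simp add: Sup_upper)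

lemma global_slope_le_iff:
  fixes g :: "'a::metric_space \<Rightarrow> real"
  assumes "0 \<le> c"
  shows "global_slope (\<lambda>x. ereal (g x)) x \<le> ereal c \<longleftrightarrow> (\<forall>y. g x - g y \<le> c * dist x y)"
proof -
  have "ereal (max (g x - g y) 0 / dist x y) \<le> ereal c \<longleftrightarrow> g x - g y \<le> c * dist x y"
    if "y \<noteq> x" for y
    using that assms by (auto simp: divide_le_eq mult.commute)
  then show ?thesis
    using assms unfolding global_slope_ereal Sup_le_iff by force
qed

lemma less_global_slope_iff:
  fixes g :: "'a::metric_space \<Rightarrow> real"
  assumes "0 \<le> c"
  shows "ereal c < global_slope (\<lambda>x. ereal (g x)) x \<longleftrightarrow> (\<exists>y. y \<noteq> x \<and> c * dist x y < g x - g y)"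
proof -
  have "ereal c < ereal (max (g x - g y) 0 / dist x y) \<longleftrightarrow> c * dist x y < g x - g y"
    if "y \<noteq> x" for y
  proof -
    have "0 \<le> c * dist x y"
      using assms by simp
    then show ?thesis
      using that by (auto simp: less_divide_eq mult.commute max_def)
  qed
  then show ?thesis
    using assms unfolding global_slope_ereal less_Sup_iff by force
qed

lemma one_le_global_slope_iff:
  fixes g :: "'a::metric_space \<Rightarrow> real"
  shows "1 \<le> global_slope (\<lambda>x. ereal (g x)) x \<longleftrightarrow>
    (\<forall>lam. 0 < lam \<longrightarrow> lam < 1 \<longrightarrow> (\<exists>y. y \<noteq> x \<and> lam * dist x y < g x - g y))"
  (is "?lhs \<longleftrightarrow> ?rhs")
proof
  assume ?lhs
  then show ?rhs
    using less_global_slope_iff by (metis ereal_less(3) less_eq_real_def less_le_trans)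
next
  assume ?rhs
  show ?lhs
  proof (rule dense_le_bounded[of 0 1])
    fix w :: ereal
    assume "0 < w" "w < 1"
    then obtain lam where "w = ereal lam" "0 < lam" "lam < 1"
      by (cases w) auto
    with \<open>?rhs\<close> show "w \<le> global_slope (\<lambda>x. ereal (g x)) x"
      using less_global_slope_iff[of lam g x] by auto
  qed simp
qed

section \<open>Ekeland's variational principle\<close>

lemma complete_UNIV_nest:
  fixes C :: "nat \<Rightarrow> 'a::metric_space set"
  assumes "complete (UNIV :: 'a set)" and "\<And>n. closed (C n)" and "\<And>n. C n \<noteq> {}"
    and "decseq C" and "\<And>e. 0 < e \<Longrightarrow> \<exists>n a. C n \<subseteq> cball a e"
  obtains a where "\<And>n. a \<in> C n"
proof -
  have "Met_TC.mcomplete TYPE('a)"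
    using assms(1) by simp
  then have "\<Inter> (range C) \<noteq> {}"
    unfolding Met_TC.mcomplete_nest using assms(2-5) by simp
  then show thesis
    using that by blast
qed

definition ekeland_set :: "('a::metric_space \<Rightarrow> real) \<Rightarrow> real \<Rightarrow> 'a \<Rightarrow> 'a set" where
  "ekeland_set f lam z = {w. f w + lam * dist z w \<le> f z}"

lemma ekeland_set_refl: "z \<in> ekeland_set f lam z"
  by (simp add: ekeland_set_def)

lemma ekeland_set_subset:
  assumes "0 \<le> lam" and "w \<in> ekeland_set f lam z"
  shows "ekeland_set f lam w \<subseteq> ekeland_set f lam z"
proof
  fix v
  assume "v \<in> ekeland_set f lam w"
  moreover have "lam * dist z v \<le> lam * dist z w + lam * dist w v"
    using dist_triangle[of z v w] assms(1) by (simp add: distrib_left[symmetric] mult_left_mono)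
  ultimately show "v \<in> ekeland_set f lam z"
    using assms(2) by (simp add: ekeland_set_def)
qed

lemma closed_ekeland_set:
  assumes "continuous_on UNIV f"
  shows "closed (ekeland_set f lam z)"
  unfolding ekeland_set_def by (intro closed_Collect_le continuous_intros assms)

text \<open>Each step moves to an almost minimiser of f on the current Ekeland set; this forces the
  next Ekeland set into a ball of radius (1/2)^n / lam.\<close>

lemma ekeland_sequence:
  fixes f :: "'a::metric_space \<Rightarrow> real"
  assumes bdd: "bdd_below (range f)" and lam: "0 < lam"
  obtains zs where "zs 0 = x" and "\<And>n. zs (Suc n) \<in> ekeland_set f lam (zs n)"
    and "\<And>n. ekeland_set f lam (zs (Suc n)) \<subseteq> cball (zs (Suc n)) ((1/2)^n / lam)"
proof -
  let ?S = "ekeland_set f lam"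
  have "\<exists>w \<in> ?S z. f w < Inf (f ` ?S z) + (1/2)^n" for z n
    using cInf_lessD[of "f ` ?S z" "Inf (f ` ?S z) + (1/2)^n"] ekeland_set_refl[of z f lam] by auto
  then obtain step where step_in: "\<And>z n. step z n \<in> ?S z"
    and step_inf: "\<And>z n. f (step z n) < Inf (f ` ?S z) + (1/2)^n"
    by metis
  define zs where "zs = rec_nat x (\<lambda>n z. step z n)"
  have zs_Suc: "zs (Suc n) = step (zs n) n" for n
    by (simp add: zs_def)
  have shrink: "?S (zs (Suc n)) \<subseteq> cball (zs (Suc n)) ((1/2)^n / lam)" for n
  proof
    fix w
    assume w: "w \<in> ?S (zs (Suc n))"
    then have "w \<in> ?S (zs n)"
      using ekeland_set_subset[of lam "zs (Suc n)" f "zs n"] step_in lam by (auto simp: zs_Suc)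
    then have "Inf (f ` ?S (zs n)) \<le> f w"
      using bdd by (intro cInf_lower) (auto intro: bdd_below_mono)
    then have "lam * dist (zs (Suc n)) w < (1/2)^n"
      using w step_inf[of "zs n" n] by (simp add: ekeland_set_def zs_Suc)
    then show "w \<in> cball (zs (Suc n)) ((1/2)^n / lam)"
      using lam by (simp add: le_divide_eq mult.commute)
  qed
  show thesis
  proof (rule that)
    show "zs 0 = x"
      by (simp add: zs_def)
    show "zs (Suc n) \<in> ?S (zs n)" for n
      using step_in by (simp add: zs_Suc)
  qed (fact shrink)
qed

lemma ekeland_variational_principle:
  fixes f :: "'a::metric_space \<Rightarrow> real"
  assumes complete: "complete (UNIV :: 'a set)" and cont: "continuous_on UNIV f"
    and bdd: "bdd_below (range f)" and lam: "0 < lam"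
  obtains z where "f z + lam * dist x z \<le> f x" and "\<And>w. w \<noteq> z \<Longrightarrow> f z < f w + lam * dist z w"
proof -
  let ?S = "ekeland_set f lam"
  obtain zs where zs_0: "zs 0 = x" and zs_Suc: "\<And>n. zs (Suc n) \<in> ?S (zs n)"
    and shrink: "\<And>n. ?S (zs (Suc n)) \<subseteq> cball (zs (Suc n)) ((1/2)^n / lam)"
    using ekeland_sequence[OF bdd lam] by blast
  have radius: "(\<lambda>n. (1/2)^n / lam) \<longlonglongrightarrow> 0"
    by (intro tendsto_divide_zero LIMSEQ_power_zero) simp_all
  have dec: "decseq (\<lambda>n. ?S (zs n))"
    using ekeland_set_subset[OF less_imp_le[OF lam] zs_Suc] by (intro decseq_SucI) simp
  have small: "\<exists>n a. ?S (zs n) \<subseteq> cball a e" if "0 < e" for e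
  proof -
    obtain n where "(1/2)^n / lam < e"
      using order_tendstoD(2)[OF radius \<open>0 < e\<close>] by (auto simp: eventually_sequentially)
    then have "?S (zs (Suc n)) \<subseteq> cball (zs (Suc n)) e"
      using shrink[of n] subset_cball[of "(1/2)^n / lam" e] by auto
    then show ?thesis
      by blast
  qed
  obtain z where z: "\<And>n. z \<in> ?S (zs n)"
    using complete_UNIV_nest[of "\<lambda>n. ?S (zs n)"] complete closed_ekeland_set[OF cont]
      ekeland_set_refl dec small by blast
  have "f z < f w + lam * dist z w" if "w \<noteq> z" for w
  proof (rule ccontr)
    assume "\<not> ?thesis"
    then have "w \<in> ?S z"
      by (simp add: ekeland_set_def)
    then have w_in: "w \<in> ?S (zs n)" for n
      using ekeland_set_subset[OF _ z] lam by (meson less_imp_le subsetD)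
    have diam: "dist z w \<le> 2 * ((1/2)^n / lam)" for n
    proof -
      have "dist (zs (Suc n)) z \<le> (1/2)^n / lam" "dist (zs (Suc n)) w \<le> (1/2)^n / lam"
        using shrink[of n] z[of "Suc n"] w_in[of "Suc n"] by auto
      then show ?thesis
        using dist_triangle2[of z w "zs (Suc n)"] by (simp add: dist_commute)
    qed
    have "dist z w \<le> 0"
      by (rule LIMSEQ_le_const[OF tendsto_mult_right_zero[OF radius, of 2]]) (use diam in blast)
    with \<open>w \<noteq> z\<close> show False
      by simp
  qed
  moreover have "f z + lam * dist x z \<le> f x"
    using z[of 0] by (simp add: ekeland_set_def zs_0)
  ultimately show ?thesis
    using that by blast
qed

lemma continuous_on_if_diff_le_dist:
  fixes g :: "'a::metric_space \<Rightarrow> real"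
  assumes "\<And>x y. g x - g y \<le> dist x y"
  shows "continuous_on UNIV g"
proof (rule lipschitz_on_continuous_on)
  show "1-lipschitz_on UNIV g"
  proof (rule lipschitz_onI)
    show "dist (g x) (g y) \<le> 1 * dist x y" for x y
      using assms[of x y] assms[of y x] by (simp add: dist_real_def dist_commute abs_le_iff)
  qed simp
qed

lemma lsc_ereal_if_continuous:
  fixes g :: "'a::metric_space \<Rightarrow> real"
  assumes "continuous_on UNIV g"
  shows "lsc (\<lambda>x. ereal (g x))"
  unfolding lsc_def
proof (intro allI impI)
  fix x c
  assume "c < ereal (g x)"
  moreover have "((\<lambda>y. ereal (g y)) \<longlongrightarrow> ereal (g x)) (at x)"
    using assms by (intro tendsto_ereal) (simp add: continuous_on_eq_continuous_at isCont_def)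
  ultimately show "\<forall>\<^sub>F y in at x. c < ereal (g y)"
    by (rule order_tendstoD(1)[rotated])
qed

lemma dist_le_if_global_slope_ge_one:
  fixes f :: "'a::metric_space \<Rightarrow> real"
  assumes complete: "complete (UNIV :: 'a set)" and cont: "continuous_on UNIV f"
    and bdd: "bdd_below (range f)"
    and steep: "\<And>z. z \<noteq> x0 \<Longrightarrow> 1 \<le> global_slope (\<lambda>x. ereal (f x)) z"
  shows "f x0 + dist x x0 \<le> f x"
proof -
  have "lam * dist x x0 \<le> f x - f x0" if lam: "0 < lam" "lam < 1" for lam
  proof -
    obtain z where z: "f z + lam * dist x z \<le> f x"
      and strict_min: "\<And>w. w \<noteq> z \<Longrightarrow> f z < f w + lam * dist z w"
      using ekeland_variational_principle[OF complete cont bdd lam(1)] by blast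
    have "z = x0"
    proof (rule ccontr)
      assume "z \<noteq> x0"
      then have "ereal lam < global_slope (\<lambda>x. ereal (f x)) z"
        using steep lam(2) by (meson ereal_less(3) less_le_trans)
      then obtain w where "w \<noteq> z" "lam * dist z w < f z - f w"
        using less_global_slope_iff[OF less_imp_le[OF lam(1)]] by blast
      with strict_min show False
        by force
    qed
    with z show ?thesis
      by (simp add: dist_commute)
  qed
  then have "dist x x0 \<le> f x - f x0"
    by (rule field_le_mult_one_interval)
  then show ?thesis
    by simp
qed

definition unit_slope_profile :: "'a::metric_space \<Rightarrow> ('a \<Rightarrow> real) \<Rightarrow> bool" where
  "unit_slope_profile x0 g \<longleftrightarrow> g x0 = 0 \<and> (\<forall>x. 0 \<le> g x) \<and> (\<forall>x y. g x - g y \<le> dist x y) \<and>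
     (\<forall>x. x \<noteq> x0 \<longrightarrow> 1 \<le> global_slope (\<lambda>x. ereal (g x)) x)"

lemma is_solution_G0_real_valued:
  assumes "is_solution_G0 l u"
  obtains g where "u = (\<lambda>x. ereal (g x))" and "\<And>x. 0 \<le> g x"
proof
  have u_finite: "u x \<noteq> \<infinity>" for x
  proof -
    have "global_slope u x = ereal (l x)"
      using assms by (simp add: is_solution_G0_def)
    then show ?thesis
      by (auto simp: global_slope_def split: if_splits)
  qed
  have u_nonneg: "0 \<le> u x" for x
    using assms INF_lower[of x UNIV u] by (simp add: is_solution_G0_def)
  show "u = (\<lambda>x. ereal (real_of_ereal (u x)))"
  proof
    show "u x = ereal (real_of_ereal (u x))" for x
      using u_finite[of x] u_nonneg[of x] by (cases "u x") auto
  qed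
  show "0 \<le> real_of_ereal (u x)" for x
    using u_nonneg by (simp add: real_of_ereal_pos)
qed

lemma is_solution_G0_imp_unit_slope_profile:
  fixes x0 :: "'a::metric_space" and l :: "'a \<Rightarrow> real"
  assumes l_x0: "l x0 = 0" and l_other: "\<And>x. x \<noteq> x0 \<Longrightarrow> l x = 1"
    and sol: "is_solution_G0 l u"
  obtains g where "unit_slope_profile x0 g" and "u = (\<lambda>x. ereal (g x))"
proof -
  obtain g where u: "u = (\<lambda>x. ereal (g x))" and g_nonneg: "\<And>x. 0 \<le> g x"
    using is_solution_G0_real_valued[OF sol] by blast
  have slope: "global_slope (\<lambda>x. ereal (g x)) x = ereal (l x)" for x
    using sol u by (simp add: is_solution_G0_def)
  have g_min: "g x0 \<le> g y" for y
    using slope[of x0] l_x0 global_slope_le_iff[of 0 g x0] by simp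
  have "g x0 = 0"
  proof -
    have "ereal (g x0) \<le> (INF x. ereal (g x))"
      using g_min by (intro INF_greatest) simp
    then show ?thesis
      using sol u g_nonneg[of x0] by (simp add: is_solution_G0_def)
  qed
  moreover have "g x - g y \<le> dist x y" for x y
  proof (cases "x = x0")
    case True
    show ?thesis
      unfolding True using g_min[of y] zero_le_dist[of x0 y] by linarith
  next
    case False
    then show ?thesis
      using slope[of x] l_other global_slope_le_iff[of 1 g x] by simp
  qed
  moreover have "1 \<le> global_slope (\<lambda>x. ereal (g x)) x" if "x \<noteq> x0" for x
    using slope[of x] l_other[OF that] by simp
  ultimately have "unit_slope_profile x0 g"
    using g_nonneg unfolding unit_slope_profile_def by blast
  with u show thesis
    using that by blast
qed

lemma is_solution_G0_if_unit_slope_profile: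
  fixes x0 :: "'a::metric_space" and l :: "'a \<Rightarrow> real"
  assumes l_x0: "l x0 = 0" and l_other: "\<And>x. x \<noteq> x0 \<Longrightarrow> l x = 1"
    and g: "unit_slope_profile x0 g"
  shows "is_solution_G0 l (\<lambda>x. ereal (g x))"
proof -
  have lip: "g x - g y \<le> dist x y" for x y
    using g by (simp add: unit_slope_profile_def)
  have "(INF x. ereal (g x)) = 0"
    using g by (intro antisym INF_lower2[of x0] INF_greatest) (auto simp: unit_slope_profile_def)
  moreover have "global_slope (\<lambda>x. ereal (g x)) x = ereal (l x)" for x
  proof (cases "x = x0")
    case True
    then have "global_slope (\<lambda>x. ereal (g x)) x \<le> 0"
      using g global_slope_le_iff[of 0 g x] by (simp add: unit_slope_profile_def zero_ereal_def)
    then show ?thesis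
      using True l_x0 global_slope_nonneg[of "\<lambda>x. ereal (g x)" x0] by (simp add: zero_ereal_def)
  next
    case False
    then have "global_slope (\<lambda>x. ereal (g x)) x \<le> 1"
      using lip global_slope_le_iff[of 1 g x] by (simp add: one_ereal_def)
    then show ?thesis
      using False g l_other by (simp add: antisym unit_slope_profile_def one_ereal_def)
  qed
  ultimately show ?thesis
    unfolding is_solution_G0_def
    using lsc_ereal_if_continuous continuous_on_if_diff_le_dist lip by blast
qed

lemma unit_slope_profile_dist: "unit_slope_profile x0 (\<lambda>x. dist x x0)"
proof -
  have "dist x x0 - dist y x0 \<le> dist x y" for x y
    using dist_triangle[of x x0 y] by simp
  moreover have "\<exists>y. y \<noteq> x \<and> lam * dist x y < dist x x0 - dist y x0"
    if "x \<noteq> x0" "lam < 1" for x lam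
    using that by (intro exI[of _ x0]) simp
  ultimately show ?thesis
    unfolding unit_slope_profile_def one_le_global_slope_iff by simp
qed

lemma unit_slope_profile_unique:
  fixes x0 :: "'a::metric_space"
  assumes "complete (UNIV :: 'a set)" and "unit_slope_profile x0 g"
  shows "g = (\<lambda>x. dist x x0)"
proof
  fix x
  have lip: "\<And>x y. g x - g y \<le> dist x y" and "g x0 = 0"
    using assms(2) by (auto simp: unit_slope_profile_def)
  moreover have "g x0 + dist x x0 \<le> g x"
    using assms continuous_on_if_diff_le_dist[OF lip]
    by (intro dist_le_if_global_slope_ge_one) (auto simp: unit_slope_profile_def intro: bdd_belowI)
  ultimately show "g x = dist x x0"
    using lip[of x x0] by simp
qed

section \<open>A second solution on incomplete spaces\<close>

lemma Cauchy_imp_convergent_dist: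
  fixes s :: "nat \<Rightarrow> 'a::metric_space"
  assumes "Cauchy s"
  shows "convergent (\<lambda>n. dist x (s n))"
proof -
  have "uniformly_continuous_on UNIV (dist x)"
    by (intro uniformly_continuous_on_dist uniformly_continuous_on_const uniformly_continuous_on_id)
  then have "Cauchy (dist x \<circ> s)"
    using uniformly_continuous_imp_Cauchy_continuous assms by (auto simp: Cauchy_continuous_on_def)
  then show ?thesis
    by (simp add: Cauchy_convergent_iff o_def)
qed

lemma distance_to_missing_limit:
  fixes s :: "nat \<Rightarrow> 'a::metric_space"
  assumes cauchy: "Cauchy s" and not_conv: "\<not> convergent s"
  obtains h where "\<And>x. (\<lambda>n. dist x (s n)) \<longlonglongrightarrow> h x" and "\<And>x. 0 < h x"
    and "\<And>x y. h x - h y \<le> dist x y" and "(\<lambda>n. h (s n)) \<longlonglongrightarrow> 0"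
proof
  define h where "h x = lim (\<lambda>n. dist x (s n))" for x
  show conv: "(\<lambda>n. dist x (s n)) \<longlonglongrightarrow> h x" for x
    using Cauchy_imp_convergent_dist[OF cauchy] by (simp add: h_def convergent_LIMSEQ_iff)
  show "0 < h x" for x
  proof -
    have "0 \<le> h x"
      by (rule LIMSEQ_le_const[OF conv]) simp
    moreover have "h x \<noteq> 0"
    proof
      assume "h x = 0"
      then have "s \<longlonglongrightarrow> x"
        using conv[of x] tendsto_dist_iff[of s x sequentially] by (simp add: dist_commute)
      with not_conv show False
        by (auto simp: convergent_def)
    qed
    ultimately show ?thesis
      by simp
  qed
  show "h x - h y \<le> dist x y" for x y
  proof (rule LIMSEQ_le_const2[OF tendsto_diff[OF conv conv]])
    show "\<exists>N. \<forall>n\<ge>N. dist x (s n) - dist y (s n) \<le> dist x y"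
      using dist_triangle[of x _ y] by (auto simp: diff_le_eq add.commute)
  qed
  show "(\<lambda>n. h (s n)) \<longlonglongrightarrow> 0"
  proof (rule LIMSEQ_I)
    fix r :: real
    assume "0 < r"
    then obtain M where M: "\<And>m n. m \<ge> M \<Longrightarrow> n \<ge> M \<Longrightarrow> dist (s m) (s n) < r / 2"
      using cauchy unfolding Cauchy_def by (meson half_gt_zero)
    have "norm (h (s n) - 0) < r" if "n \<ge> M" for n
    proof -
      have "h (s n) \<le> r / 2"
        by (rule LIMSEQ_le_const2[OF conv]) (use M that in \<open>auto intro: less_imp_le\<close>)
      moreover have "0 \<le> h (s n)"
        by (rule LIMSEQ_le_const[OF conv]) simp
      ultimately show ?thesis
        using \<open>0 < r\<close> by simp
    qed
    then show "\<exists>M. \<forall>n\<ge>M. norm (h (s n) - 0) < r"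
      by blast
  qed
qed

context
  fixes s :: "nat \<Rightarrow> 'a::metric_space" and h :: "'a \<Rightarrow> real"
  assumes conv: "\<And>x. (\<lambda>n. dist x (s n)) \<longlonglongrightarrow> h x" and h_pos: "\<And>x. 0 < h x"
    and h_lip: "\<And>x y. h x - h y \<le> dist x y" and h_tail: "(\<lambda>n. h (s n)) \<longlonglongrightarrow> 0"
begin

text \<open>Away from x0, the function below descends with slope 1 either straight to x0 or along s
  towards the missing limit point.\<close>

lemma unit_slope_profile_min_missing_limit:
  "unit_slope_profile x0 (\<lambda>x. min (dist x x0) (h x))"
proof -
  define g where "g x = min (dist x x0) (h x)" for x
  have "g x0 = 0" "0 \<le> g x" for x
    using h_pos[of x0] h_pos[of x] by (simp_all add: g_def less_imp_le)
  moreover have "g x - g y \<le> dist x y" for x y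
    using h_lip[of x y] dist_triangle[of x x0 y] by (auto simp: g_def min_def)
  moreover have "\<exists>w. w \<noteq> z \<and> lam * dist z w < g z - g w"
    if "z \<noteq> x0" "0 < lam" "lam < 1" for z lam
  proof (cases "dist z x0 \<le> h z")
    case True
    then show ?thesis
      using that h_pos[of x0] by (intro exI[of _ x0]) (simp add: g_def)
  next
    case False
    have "(\<lambda>n. h z - h (s n) - lam * dist z (s n)) \<longlonglongrightarrow> h z - 0 - lam * h z"
      by (intro tendsto_intros h_tail conv)
    moreover have "0 < h z - 0 - lam * h z"
      using h_pos[of z] that by simp
    ultimately have "\<forall>\<^sub>F n in sequentially. 0 < h z - h (s n) - lam * dist z (s n)"
      by (rule order_tendstoD(1))
    then obtain n where "0 < h z - h (s n) - lam * dist z (s n)"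
      by (auto simp: eventually_sequentially)
    then have "lam * dist z (s n) < h z - h (s n)"
      by simp
    moreover have "g z = h z" "g (s n) \<le> h (s n)"
      using False by (auto simp: g_def)
    ultimately show ?thesis
      by (intro exI[of _ "s n"]) auto
  qed
  ultimately have "unit_slope_profile x0 g"
    unfolding unit_slope_profile_def one_le_global_slope_iff by blast
  then show ?thesis
    by (simp add: g_def[abs_def])
qed

lemma min_missing_limit_neq_dist: "(\<lambda>x. min (dist x x0) (h x)) \<noteq> (\<lambda>x. dist x x0)"
proof -
  have "\<forall>\<^sub>F n in sequentially. h (s n) < h x0 / 2 \<and> h x0 / 2 < dist x0 (s n)"
    using order_tendstoD(2)[OF h_tail, of "h x0 / 2"] order_tendstoD(1)[OF conv[of x0], of "h x0 / 2"]
      h_pos[of x0]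
    by (intro eventually_conj) simp_all
  then obtain n where "h (s n) < h x0 / 2" "h x0 / 2 < dist x0 (s n)"
    by (auto simp: eventually_sequentially)
  then have "min (dist (s n) x0) (h (s n)) \<noteq> dist (s n) x0"
    by (simp add: dist_commute)
  then show ?thesis
    by metis
qed

end

lemma not_complete_obtains_other_unit_slope_profile:
  fixes x0 :: "'a::metric_space"
  assumes "\<not> complete (UNIV :: 'a set)"
  obtains g where "unit_slope_profile x0 g" and "g \<noteq> (\<lambda>x. dist x x0)"
proof -
  obtain s :: "nat \<Rightarrow> 'a" where "Cauchy s" "\<not> convergent s"
    using assms unfolding complete_def convergent_def by blast
  then obtain h where "\<And>x. (\<lambda>n. dist x (s n)) \<longlonglongrightarrow> h x" "\<And>x. 0 < h x"
    "\<And>x y. h x - h y \<le> dist x y" "(\<lambda>n. h (s n)) \<longlonglongrightarrow> 0"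
    by (rule distance_to_missing_limit) blast
  note h = this
  show thesis
    by (rule that[OF unit_slope_profile_min_missing_limit[OF h] min_missing_limit_neq_dist[OF h]])
qed

theorem corollary3p12:
  fixes x0 :: "'a::metric_space" and l :: "'a \<Rightarrow> real"
  assumes "l x0 = 0"
    and "\<And>x. x \<noteq> x0 \<Longrightarrow> l x = 1"
  shows "complete (UNIV :: 'a set) \<longleftrightarrow>
           (\<forall>u. is_solution_G0 l u \<longleftrightarrow> u = (\<lambda>x. ereal (dist x x0)))"
proof
  assume complete: "complete (UNIV :: 'a set)"
  show "\<forall>u. is_solution_G0 l u \<longleftrightarrow> u = (\<lambda>x. ereal (dist x x0))"
  proof (intro allI iffI)
    fix u
    assume sol: "is_solution_G0 l u"
    obtain g where g: "unit_slope_profile x0 g" and u: "u = (\<lambda>x. ereal (g x))"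
      using is_solution_G0_imp_unit_slope_profile[of l x0 u, OF assms sol] by blast
    show "u = (\<lambda>x. ereal (dist x x0))"
      unfolding u unit_slope_profile_unique[OF complete g] ..
  next
    fix u :: "'a \<Rightarrow> ereal"
    assume "u = (\<lambda>x. ereal (dist x x0))"
    with is_solution_G0_if_unit_slope_profile[of l x0, OF assms unit_slope_profile_dist]
    show "is_solution_G0 l u"
      by simp
  qed
next
  assume unique: "\<forall>u. is_solution_G0 l u \<longleftrightarrow> u = (\<lambda>x. ereal (dist x x0))"
  show "complete (UNIV :: 'a set)"
  proof (rule ccontr)
    assume "\<not> complete (UNIV :: 'a set)"
    then obtain g where g: "unit_slope_profile x0 g" and other: "g \<noteq> (\<lambda>x. dist x x0)"
      by (rule not_complete_obtains_other_unit_slope_profile)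
    have "(\<lambda>x. ereal (g x)) = (\<lambda>x. ereal (dist x x0))"
      using is_solution_G0_if_unit_slope_profile[of l x0, OF assms g]
      by (rule unique[rule_format, THEN iffD1])
    with other show False
      by (simp add: fun_eq_iff)
  qed
qed

end
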